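(* Let $G$ be a networked timed DES and let $\tilde{G}$ be its communication automaton, as defined in the context. Then $\psi(\mathcal{L}(\tilde{G}))=\mathcal{L}(G)$.
   Context: A timed automaton is $G=(Q,\tilde{\Sigma},\delta,\Gamma,q_0,Q_m)$ with finite state set $Q$, finite event set $\tilde{\Sigma}=\Sigma\cup\{tick\}$ ($tick$ denotes the elapse of one unit of time), partial transition function $\delta:Q\times\tilde{\Sigma}\to Q$ (extended to strings in the usual way), active event function $\Gamma$, initial state $q_0$ and marked states $Q_m$; $\mathcal{L}(G)=\{s:\delta(q_0,s)\text{ is defined}\}$, $\mathcal{L}_m(G)=\{s:\delta(q_0,s)\in Q_m\}$. Standing assumptions: there is a set $\Sigma_{for}\subseteq\Sigma$ of enforceable events; for all $q$ and all nonempty $s\in\Sigma^*$, $\delta(q,s)\neq q$; every state has at least one defined transition; and for every $s\in\mathcal{L}(G)$ with $s\,tick\notin\mathcal{L}(G)$ there is $\sigma\in\Sigma_{for}$ with $s\sigma\in\mathcal{L}(G)$. The system is $G=G_1\|\cdots\|G_n$ (parallel composition) where $G_i$ has event set $\tilde{\Sigma}_i$ and $\tilde{\Sigma}_i\cap\tilde{\Sigma}_j=\{tick\}$ for $i\neq j$; $\mathcal{A}=\{1,\dots,n\}$ indexes supervisors, supervisor $i$ having observable events $\tilde{\Sigma}_{o,i}\subseteq\tilde{\Sigma}_i$. Communication: a Boolean matrix $\mathbf{COM}\in\{0,1\}^{n\times n}$ with $\mathbf{COM}_{ii}=0$. For each $(i,j)$ with $\mathbf{COM}_{ij}=1$ there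 is a channel $\mathbf{CH}_{ij}$ from supervisor $i$ to supervisor $j$, a set $\Sigma_{ij}\subseteq\tilde{\Sigma}_{o,i}\setminus\{tick\}$ of events communicated from $i$ to $j$, a subset $\Sigma_{L,ij}\subseteq\Sigma_{ij}$ of events that may be lost, and a delay bound $N_{ij}\in\mathbb{N}$ (in $tick$s); channels are FIFO. For $\mathbf{COM}_{ij}=0$ put $\Sigma_{ij}=\emptyset$. A configuration of $\mathbf{CH}_{ij}$ is a finite sequence $\theta_{ij}=(\sigma_1,n_1)\cdots(\sigma_k,n_k)$ with $\sigma_d\in\Sigma_{ij}$, $n_d\in\{0,\dots,N_{ij}\}$ (number of $tick$s since $\sigma_d$ entered the channel); $\theta_{ij}=\varepsilon$ whenever $\mathbf{COM}_{ij}=0$. A channel state is the tuple $\bar\theta=(\theta_{ij})_{i,j\in\mathcal{A}}$. Let $\mathbf{MAX}(\theta_{ij})=n_1$ if $\theta_{ij}\neq\varepsilon$ and $0$ otherwise; $\varepsilon^+=\varepsilon$ and $((\sigma_1,n_1)\cdots(\sigma_k,n_k))^+=(\sigma_1,n_1+1)\cdots(\sigma_k,n_k+1)$. Operators: $\mathbf{TIME}(\bar\theta)=(\theta_{ij}^+)_{i,j}$, defined iff $\mathbf{MAX}(\theta_{ij}^+)\le N_{ij}$ for all $i,j$; for $\sigma\in\Sigma$, $\mathbf{IN}(\bar\theta,\sigma)$ replaces $\theta_{ij}$ by $\theta_{ij}(\sigma,0)$ for every $(i,j)$ with $\sigma\in\Sigma_{ij}$ and leaves the other components unchanged; for $\sigma\in\Sigma_{ij}$,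 $\mathbf{OUT}_{ij}(\bar\theta,\sigma)$ is defined iff $\theta_{ij}=(\sigma_1,n_1)\cdots(\sigma_k,n_k)\neq\varepsilon$ with $\sigma_1=\sigma$, and then removes $(\sigma_1,n_1)$ from $\theta_{ij}$; for $d\in\mathbb{N}$, $\mathbf{LOSS}_{ij}(\bar\theta,d)$ is defined iff $\theta_{ij}=(\sigma_1,n_1)\cdots(\sigma_k,n_k)\neq\varepsilon$, $d\le k$ and $\sigma_d\in\Sigma_{L,ij}$, and then removes the $d$th pair from $\theta_{ij}$. Fresh events: $f_{ij}(\sigma)$ for $\sigma\in\Sigma_{ij}$ (the first event $\sigma$ in $\mathbf{CH}_{ij}$ is delivered), forming $\Sigma^f$, and $g_{ij}(d)$ for $d\in\mathbb{N}$ (the $d$th event in $\mathbf{CH}_{ij}$ is lost), forming $\Sigma^g$; $f_{ij},g_{ij}$ are injective with pairwise disjoint images. The communication automaton $\tilde{G}$ is the accessible part of the automaton with states $(q,\bar\theta)$, event set $\tilde{E}\subseteq\tilde{\Sigma}\cup\Sigma^f\cup\Sigma^g$, initial state $(q_0,(\varepsilon)_{i,j})$, marked states $\{(q,\bar\theta):q\in Q_m\}$, and transition function $\tilde\delta$: $\tilde\delta((q,\bar\theta),tick)=(\delta(q,tick),\mathbf{TIME}(\bar\theta))$ if both are defined; $\tilde\delta((q,\bar\theta),\sigma)=(\delta(q,\sigma),\mathbf{IN}(\bar\theta,\sigma))$ for $\sigma\in\Sigma$ if $\delta(q,\sigma)$ is defined; $\tilde\delta((q,\bar\theta),f_{ij}(\sigma))=(q,\mathbf{OUT}_{ij}(\bar\theta,\sigma))$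 if defined; $\tilde\delta((q,\bar\theta),g_{ij}(d))=(q,\mathbf{LOSS}_{ij}(\bar\theta,d))$ if defined; undefined otherwise. For a string $\mu$ over $\tilde E$, $\psi(\mu)$ is obtained by deleting all events of $\Sigma^f\cup\Sigma^g$; $\psi(L)=\{\psi(\mu):\mu\in L\}$. *)

theory Defs
  imports Main
begin

datatype 'a tevent = Tick | Ev 'a

text \<open>A timed automaton (Q, Sigma + tick, delta, Gamma, q0, Qm). The component evs is the
  set Sigma of non-tick events; the full event set is tick plus Ev of evs.
  The active event function Gamma is determined by delta (see active).\<close>
record ('q, 'a) ta =
  states :: "'q set"
  evs    :: "'a set"
  trans  :: "'q \<Rightarrow> 'a tevent \<Rightarrow> 'q option"
  init   :: 'q
  marked :: "'q set"

fun deltas :: "('q \<Rightarrow> 'e \<Rightarrow> 'q option) \<Rightarrow> 'q \<Rightarrow> 'e list \<Rightarrow> 'q option" where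
  "deltas d q [] = Some q"
| "deltas d q (e # s) = (case d q e of None \<Rightarrow> None | Some q' \<Rightarrow> deltas d q' s)"

definition alph :: "('q, 'a) ta \<Rightarrow> 'a tevent set" where
  "alph G = insert Tick (Ev ` evs G)"

definition active :: "('q, 'a) ta \<Rightarrow> 'q \<Rightarrow> 'a tevent set" where
  "active G q = {e. trans G q e \<noteq> None}"

definition lang :: "('q, 'a) ta \<Rightarrow> 'a tevent list set" where
  "lang G = {s. deltas (trans G) (init G) s \<noteq> None}"

definition mlang :: "('q, 'a) ta \<Rightarrow> 'a tevent list set" where
  "mlang G = {s. \<exists>q. deltas (trans G) (init G) s = Some q \<and> q \<in> marked G}"

definition wf_ta :: "('q, 'a) ta \<Rightarrow> bool" where
  "wf_ta G \<longleftrightarrow> finite (states G) \<and> finite (evs G) \<and> init G \<in> states G \<and>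
     marked G \<subseteq> states G \<and>
     (\<forall>q e. q \<notin> states G \<longrightarrow> trans G q e = None) \<and>
     (\<forall>q e q'. trans G q e = Some q' \<longrightarrow> q' \<in> states G \<and> e \<in> alph G)"

definition standing_assms :: "('q, 'a) ta \<Rightarrow> 'a set \<Rightarrow> bool" where
  "standing_assms G Sfor \<longleftrightarrow>
     Sfor \<subseteq> evs G \<and>
     (\<forall>q \<in> states G. \<forall>s. s \<noteq> [] \<and> set s \<subseteq> Ev ` evs G \<longrightarrow> deltas (trans G) q s \<noteq> Some q) \<and>
     (\<forall>q \<in> states G. active G q \<noteq> {}) \<and>
     (\<forall>s \<in> lang G. s @ [Tick] \<notin> lang G \<longrightarrow> (\<exists>\<sigma> \<in> Sfor. s @ [Ev \<sigma>] \<in> lang G))"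

definition in_comp :: "nat \<Rightarrow> (nat \<Rightarrow> ('q, 'a) ta) \<Rightarrow> 'a tevent \<Rightarrow> bool" where
  "in_comp n Gs e \<longleftrightarrow> (\<exists>i<n. e \<in> alph (Gs i))"

definition par_trans :: "nat \<Rightarrow> (nat \<Rightarrow> ('q, 'a) ta) \<Rightarrow> 'q list \<Rightarrow> 'a tevent \<Rightarrow> 'q list option" where
  "par_trans n Gs xs e =
     (if length xs = n \<and> in_comp n Gs e \<and>
         (\<forall>i<n. e \<in> alph (Gs i) \<longrightarrow> trans (Gs i) (xs ! i) e \<noteq> None)
      then Some (map (\<lambda>i. if e \<in> alph (Gs i) then the (trans (Gs i) (xs ! i) e) else xs ! i) [0..<n])
      else None)"

definition par_init :: "nat \<Rightarrow> (nat \<Rightarrow> ('q, 'a) ta) \<Rightarrow> 'q list" where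
  "par_init n Gs = map (\<lambda>i. init (Gs i)) [0..<n]"

definition par_reach :: "nat \<Rightarrow> (nat \<Rightarrow> ('q, 'a) ta) \<Rightarrow> 'q list set" where
  "par_reach n Gs = {xs. \<exists>s. deltas (par_trans n Gs) (par_init n Gs) s = Some xs}"

definition par :: "nat \<Rightarrow> (nat \<Rightarrow> ('q, 'a) ta) \<Rightarrow> ('q list, 'a) ta" where
  "par n Gs = \<lparr> states = par_reach n Gs,
                evs = (\<Union>i<n. evs (Gs i)),
                trans = (\<lambda>xs e. if xs \<in> par_reach n Gs then par_trans n Gs xs e else None),
                init = par_init n Gs,
                marked = {xs \<in> par_reach n Gs. \<forall>i<n. xs ! i \<in> marked (Gs i)} \<rparr>"

text \<open>A channel state assigns to every pair (i,j) a configuration (list of pairs (event, age)).\<close>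
type_synonym 'a chstate = "nat \<Rightarrow> nat \<Rightarrow> ('a \<times> nat) list"

definition MAXage :: "('a \<times> nat) list \<Rightarrow> nat" where
  "MAXage th = (case th of [] \<Rightarrow> 0 | p # _ \<Rightarrow> snd p)"

definition incr :: "('a \<times> nat) list \<Rightarrow> ('a \<times> nat) list" where
  "incr th = map (\<lambda>(\<sigma>, k). (\<sigma>, Suc k)) th"

definition TIME :: "nat \<Rightarrow> (nat \<Rightarrow> nat \<Rightarrow> nat) \<Rightarrow> 'a chstate \<Rightarrow> 'a chstate option" where
  "TIME n N th = (if \<forall>i<n. \<forall>j<n. MAXage (incr (th i j)) \<le> N i j
                  then Some (\<lambda>i j. incr (th i j)) else None)"

definition IN :: "(nat \<Rightarrow> nat \<Rightarrow> 'a set) \<Rightarrow> 'a chstate \<Rightarrow> 'a \<Rightarrow> 'a chstate" where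
  "IN Sig th \<sigma> = (\<lambda>i j. if \<sigma> \<in> Sig i j then th i j @ [(\<sigma>, 0)] else th i j)"

definition OUT :: "nat \<Rightarrow> nat \<Rightarrow> 'a chstate \<Rightarrow> 'a \<Rightarrow> 'a chstate option" where
  "OUT i j th \<sigma> = (if th i j \<noteq> [] \<and> fst (hd (th i j)) = \<sigma>
                    then Some (th(i := (th i)(j := tl (th i j)))) else None)"

text \<open>Loss of the d-th (1-based) pair.\<close>
definition LOSS :: "(nat \<Rightarrow> nat \<Rightarrow> 'a set) \<Rightarrow> nat \<Rightarrow> nat \<Rightarrow> 'a chstate \<Rightarrow> nat \<Rightarrow> 'a chstate option" where
  "LOSS SigL i j th d = (if th i j \<noteq> [] \<and> 1 \<le> d \<and> d \<le> length (th i j) \<and> fst (th i j ! (d - 1)) \<in> SigL i j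
                         then Some (th(i := (th i)(j := take (d - 1) (th i j) @ drop d (th i j)))) else None)"

text \<open>Events of the communication automaton: plant events, deliveries f_ij(sigma), losses g_ij(d).
  Using constructors makes f_ij, g_ij injective with pairwise disjoint images.\<close>
datatype 'a cevent = PEv "'a tevent" | Fdel nat nat 'a | Gloss nat nat nat

definition comm_trans ::
  "('q, 'a) ta \<Rightarrow> nat \<Rightarrow> (nat \<Rightarrow> nat \<Rightarrow> 'a set) \<Rightarrow> (nat \<Rightarrow> nat \<Rightarrow> 'a set) \<Rightarrow> (nat \<Rightarrow> nat \<Rightarrow> nat)
   \<Rightarrow> 'q \<times> 'a chstate \<Rightarrow> 'a cevent \<Rightarrow> ('q \<times> 'a chstate) option" where
  "comm_trans G n Sig SigL N x e = (case x of (q, th) \<Rightarrow>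
     (case e of
        PEv Tick \<Rightarrow> (case (trans G q Tick, TIME n N th) of
                      (Some q', Some th') \<Rightarrow> Some (q', th') | _ \<Rightarrow> None)
      | PEv (Ev \<sigma>) \<Rightarrow> (case trans G q (Ev \<sigma>) of
                      Some q' \<Rightarrow> Some (q', IN Sig th \<sigma>) | None \<Rightarrow> None)
      | Fdel i j \<sigma> \<Rightarrow> (if i < n \<and> j < n \<and> \<sigma> \<in> Sig i j
                      then map_option (\<lambda>th'. (q, th')) (OUT i j th \<sigma>) else None)
      | Gloss i j d \<Rightarrow> (if i < n \<and> j < n
                      then map_option (\<lambda>th'. (q, th')) (LOSS SigL i j th d) else None)))"

definition comm_init :: "('q, 'a) ta \<Rightarrow> 'q \<times> 'a chstate" where
  "comm_init G = (init G, (\<lambda>i j. []))"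

text \<open>Language of the communication automaton (taking the accessible part does not change it).\<close>
definition comm_lang ::
  "('q, 'a) ta \<Rightarrow> nat \<Rightarrow> (nat \<Rightarrow> nat \<Rightarrow> 'a set) \<Rightarrow> (nat \<Rightarrow> nat \<Rightarrow> 'a set) \<Rightarrow> (nat \<Rightarrow> nat \<Rightarrow> nat)
   \<Rightarrow> 'a cevent list set" where
  "comm_lang G n Sig SigL N = {mu. deltas (comm_trans G n Sig SigL N) (comm_init G) mu \<noteq> None}"

fun psi :: "'a cevent list \<Rightarrow> 'a tevent list" where
  "psi [] = []"
| "psi (PEv e # mu) = e # psi mu"
| "psi (Fdel i j \<sigma> # mu) = psi mu"
| "psi (Gloss i j d # mu) = psi mu"

text \<open>Components Gs 0..Gs (n-1), enforceable events Sfor, observable sets So,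
  communication matrix COM, communicated events Sig, lossable events SigL, delay bounds N.\<close>
definition networked_tdes ::
  "nat \<Rightarrow> (nat \<Rightarrow> ('q, 'a) ta) \<Rightarrow> 'a set \<Rightarrow> (nat \<Rightarrow> 'a tevent set) \<Rightarrow> (nat \<Rightarrow> nat \<Rightarrow> bool)
   \<Rightarrow> (nat \<Rightarrow> nat \<Rightarrow> 'a set) \<Rightarrow> (nat \<Rightarrow> nat \<Rightarrow> 'a set) \<Rightarrow> (nat \<Rightarrow> nat \<Rightarrow> nat) \<Rightarrow> bool" where
  "networked_tdes n Gs Sfor So COM Sig SigL N \<longleftrightarrow>
     0 < n \<and>
     (\<forall>i<n. wf_ta (Gs i)) \<and>
     (\<forall>i<n. \<forall>j<n. i \<noteq> j \<longrightarrow> evs (Gs i) \<inter> evs (Gs j) = {}) \<and>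
     standing_assms (par n Gs) Sfor \<and>
     (\<forall>i<n. So i \<subseteq> alph (Gs i)) \<and>
     (\<forall>i j. COM i j \<longrightarrow> i < n \<and> j < n) \<and>
     (\<forall>i. \<not> COM i i) \<and>
     (\<forall>i j. \<not> COM i j \<longrightarrow> Sig i j = {}) \<and>
     (\<forall>i j. Ev ` Sig i j \<subseteq> So i) \<and>
     (\<forall>i j. SigL i j \<subseteq> Sig i j)"

end

theory Submission
  imports Defs
begin

text \<open>Every run of the communication automaton projects under psi to a run of G, since
  deliveries and losses leave the plant state unchanged. Conversely, a run of G is simulated by
  delivering every message right after the plant event that sent it. The channels are then empty
  whenever a tick occurs, so TIME never blocks, whatever the delay bounds are.\<close>

lemma deltas_append:
  "deltas d q (s @ t) = (case deltas d q s of None \<Rightarrow> None | Some q' \<Rightarrow> deltas d q' t)"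
  by (induction s arbitrary: q) (auto split: option.splits)

lemma psi_append: "psi (\<mu> @ \<nu>) = psi \<mu> @ psi \<nu>"
  by (induction \<mu> rule: psi.induct) auto

lemma psi_map_Fdel: "psi (map (\<lambda>p. Fdel i j (f p)) xs) = []"
  by (induction xs) auto

lemma comm_trans_plant_state:
  assumes "comm_trans G n Sig SigL N (q, th) e = Some (q', th')"
  shows "case e of PEv a \<Rightarrow> trans G q a = Some q' | _ \<Rightarrow> q' = q"
  using assms
  by (cases e) (auto simp: comm_trans_def split: tevent.splits option.splits if_splits)

lemma plant_run_of_comm_run:
  "deltas (comm_trans G n Sig SigL N) (q, th) \<mu> \<noteq> None \<Longrightarrow> deltas (trans G) q (psi \<mu>) \<noteq> None"
proof (induction \<mu> arbitrary: q th)
  case Nil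
  then show ?case by simp
next
  case (Cons e \<mu>)
  then obtain q' th' where step: "comm_trans G n Sig SigL N (q, th) e = Some (q', th')"
    and run: "deltas (comm_trans G n Sig SigL N) (q', th') \<mu> \<noteq> None"
    by (auto split: option.splits)
  show ?case
    using comm_trans_plant_state[OF step] Cons.IH[OF run] by (cases e) auto
qed

definition chstate_in :: "(nat \<Rightarrow> nat \<Rightarrow> 'a set) \<Rightarrow> 'a chstate \<Rightarrow> bool" where
  "chstate_in Sig th \<longleftrightarrow> (\<forall>i j. fst ` set (th i j) \<subseteq> Sig i j)"

lemma deltas_deliver_channel:
  assumes "i < n" "j < n" "fst ` set (th i j) \<subseteq> Sig i j"
  shows "deltas (comm_trans G n Sig SigL N) (q, th) (map (\<lambda>p. Fdel i j (fst p)) (th i j))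
           = Some (q, th(i := (th i)(j := [])))"
  using assms(3)
proof (induction "th i j" arbitrary: th)
  case Nil
  then show ?case by (auto intro!: ext)
next
  case (Cons p xs)
  let ?th' = "th(i := (th i)(j := xs))"
  have "comm_trans G n Sig SigL N (q, th) (Fdel i j (fst p)) = Some (q, ?th')"
    using assms(1,2) Cons.prems Cons.hyps(2)[symmetric]
    by (simp add: comm_trans_def OUT_def)
  moreover have "deltas (comm_trans G n Sig SigL N) (q, ?th') (map (\<lambda>p. Fdel i j (fst p)) xs)
                   = Some (q, th(i := (th i)(j := [])))"
    using Cons.hyps(1)[of ?th'] Cons.prems Cons.hyps(2)[symmetric] by simp
  ultimately show ?case
    by (simp flip: Cons.hyps(2))
qed

lemma flush_channels:
  assumes "\<forall>(i, j) \<in> set ps. i < n \<and> j < n" "chstate_in Sig th"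
    and "\<forall>i j. (i, j) \<notin> set ps \<longrightarrow> th i j = []"
  shows "\<exists>\<mu>. psi \<mu> = [] \<and> deltas (comm_trans G n Sig SigL N) (q, th) \<mu> = Some (q, \<lambda>i j. [])"
  using assms
proof (induction ps arbitrary: th)
  case Nil
  then have "th = (\<lambda>i j. [])" by auto
  then show ?case by (intro exI[of _ "[]"]) simp
next
  case (Cons ij ps)
  obtain i j where ij: "ij = (i, j)" by fastforce
  let ?th' = "th(i := (th i)(j := []))"
  let ?deliver = "map (\<lambda>p. Fdel i j (fst p)) (th i j)"
  have deliver: "deltas (comm_trans G n Sig SigL N) (q, th) ?deliver = Some (q, ?th')"
    using Cons.prems ij by (intro deltas_deliver_channel) (auto simp: chstate_in_def)
  have "\<forall>(a, b) \<in> set ps. a < n \<and> b < n"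
    using Cons.prems(1) by auto
  moreover have "chstate_in Sig ?th'"
    using Cons.prems(2) by (auto simp: chstate_in_def)
  moreover have "\<forall>a b. (a, b) \<notin> set ps \<longrightarrow> ?th' a b = []"
    using Cons.prems(3) ij by auto
  ultimately have "\<exists>\<mu>. psi \<mu> = [] \<and>
      deltas (comm_trans G n Sig SigL N) (q, ?th') \<mu> = Some (q, \<lambda>i j. [])"
    by (rule Cons.IH)
  then obtain \<mu> where "psi \<mu> = []"
    "deltas (comm_trans G n Sig SigL N) (q, ?th') \<mu> = Some (q, \<lambda>i j. [])"
    by blast
  then show ?case
    using deliver by (intro exI[of _ "?deliver @ \<mu>"]) (simp add: deltas_append psi_append psi_map_Fdel)
qed

lemma flush_all_channels:
  assumes "\<forall>i j. Sig i j \<noteq> {} \<longrightarrow> i < n \<and> j < n" "chstate_in Sig th"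
  shows "\<exists>\<mu>. psi \<mu> = [] \<and> deltas (comm_trans G n Sig SigL N) (q, th) \<mu> = Some (q, \<lambda>i j. [])"
proof (rule flush_channels[where ps = "List.product [0..<n] [0..<n]"])
  show "\<forall>i j. (i, j) \<notin> set (List.product [0..<n] [0..<n]) \<longrightarrow> th i j = []"
  proof (intro allI impI)
    fix i j
    assume "(i, j) \<notin> set (List.product [0..<n] [0..<n])"
    then have "Sig i j = {}"
      using assms(1) by auto
    then have "fst ` set (th i j) \<subseteq> {}"
      using assms(2) unfolding chstate_in_def by metis
    then show "th i j = []"
      by simp
  qed
qed (use assms(2) in auto)

lemma TIME_empty: "TIME n N (\<lambda>i j. []) = Some (\<lambda>i j. [])"
  by (simp add: TIME_def MAXage_def incr_def)

lemma comm_run_of_plant_run: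
  assumes "\<forall>i j. Sig i j \<noteq> {} \<longrightarrow> i < n \<and> j < n"
  shows "deltas (trans G) q s \<noteq> None \<Longrightarrow>
    \<exists>\<mu>. psi \<mu> = s \<and> deltas (comm_trans G n Sig SigL N) (q, \<lambda>i j. []) \<mu> \<noteq> None"
proof (induction s arbitrary: q)
  case Nil
  then show ?case by (intro exI[of _ "[]"]) simp
next
  case (Cons e s)
  then obtain q' where q': "trans G q e = Some q'" "deltas (trans G) q' s \<noteq> None"
    by (auto split: option.splits)
  then obtain \<mu> where \<mu>: "psi \<mu> = s" "deltas (comm_trans G n Sig SigL N) (q', \<lambda>i j. []) \<mu> \<noteq> None"
    using Cons.IH by blast
  show ?case
  proof (cases e)
    case Tick
    then have "comm_trans G n Sig SigL N (q, \<lambda>i j. []) (PEv Tick) = Some (q', \<lambda>i j. [])"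
      using q' by (simp add: comm_trans_def TIME_empty)
    then show ?thesis
      using \<mu> Tick by (intro exI[of _ "PEv Tick # \<mu>"]) simp
  next
    case (Ev \<sigma>)
    let ?th = "IN Sig (\<lambda>i j. []) \<sigma>"
    have send: "comm_trans G n Sig SigL N (q, \<lambda>i j. []) (PEv (Ev \<sigma>)) = Some (q', ?th)"
      using q' Ev by (simp add: comm_trans_def)
    have "chstate_in Sig ?th"
      by (auto simp: chstate_in_def IN_def)
    then obtain \<nu> where \<nu>: "psi \<nu> = []"
      "deltas (comm_trans G n Sig SigL N) (q', ?th) \<nu> = Some (q', \<lambda>i j. [])"
      using flush_all_channels[OF assms, where G = G and SigL = SigL and N = N and q = q'] by blast
    show ?thesis
      using \<mu> \<nu> send Ev
      by (intro exI[of _ "PEv (Ev \<sigma>) # \<nu> @ \<mu>"]) (simp add: deltas_append psi_append)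
  qed
qed

lemma networked_tdes_channels_in_range:
  assumes "networked_tdes n Gs Sfor So COM Sig SigL N"
  shows "\<forall>i j. Sig i j \<noteq> {} \<longrightarrow> i < n \<and> j < n"
  using assms unfolding networked_tdes_def by metis

theorem proposition1:
  fixes n :: nat and Gs :: "nat \<Rightarrow> ('q, 'a) ta" and Sfor :: "'a set"
    and So :: "nat \<Rightarrow> 'a tevent set" and COM :: "nat \<Rightarrow> nat \<Rightarrow> bool"
    and Sig SigL :: "nat \<Rightarrow> nat \<Rightarrow> 'a set" and N :: "nat \<Rightarrow> nat \<Rightarrow> nat"
  assumes "networked_tdes n Gs Sfor So COM Sig SigL N"
  shows "psi ` comm_lang (par n Gs) n Sig SigL N = lang (par n Gs)"
proof
  show "psi ` comm_lang (par n Gs) n Sig SigL N \<subseteq> lang (par n Gs)"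
    using plant_run_of_comm_run
    unfolding comm_lang_def comm_init_def lang_def by fastforce
  show "lang (par n Gs) \<subseteq> psi ` comm_lang (par n Gs) n Sig SigL N"
    using comm_run_of_plant_run[OF networked_tdes_channels_in_range[OF assms]]
    unfolding comm_lang_def comm_init_def lang_def by fastforce
qed

end
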